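(* Let $\kappa>0$, let $V:[0,1]\to\mathbb R$ be smooth, and let $\theta:[0,1]\to\mathbb R$ be smooth with $\theta>0$ on $(0,1)$, $\theta(0)=\theta(1)=0$, $\theta'(0)>0$, $\theta'(1)<0$. Let $(\lambda,w,z)$ be the continuous characteristic triple. Then $$w(x)z(x)=\frac1C\,\frac{w^2(x)e^{-2V(x)/\kappa}}{\theta(x)},\qquad x\in(0,1),$$ where $C=\int_0^1\frac{w^2(x)e^{-2V(x)/\kappa}}{\theta(x)}\,dx>0$.
   Context: The continuous characteristic triple $(\lambda,w,z)$ consists of the principal eigenvalue $\lambda$ and positive (on $(0,1)$) principal eigenfunctions of the problems $$-\tfrac\kappa2(\theta z)''-(\theta zV')'=\lambda z\ \text{on }(0,1),\quad \lim_{x\to0,1}\theta(x)z(x)=0,$$ $$-\tfrac\kappa2\theta w''+\theta V'w'=\lambda w\ \text{on }(0,1),\quad w(0)=w(1)=0,$$ normalised by $\int_0^1z\,dx=1$ and $\int_0^1wz\,dx=1$ (these principal eigenpairs exist and are unique up to normalisation). *)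

theory Defs
  imports "HOL-Analysis.Analysis"
begin

definition smooth_on_unit :: "(real \<Rightarrow> real) \<Rightarrow> bool" where
  "smooth_on_unit f \<longleftrightarrow>
     (\<exists>D :: nat \<Rightarrow> real \<Rightarrow> real. D 0 = f \<and>
        (\<forall>n. \<forall>x\<in>{0..1}. (D n has_real_derivative D (Suc n) x) (at x within {0..1})))"

definition twice_diff_open_unit :: "(real \<Rightarrow> real) \<Rightarrow> bool" where
  "twice_diff_open_unit f \<longleftrightarrow>
     (\<forall>x\<in>{0<..<1}. f differentiable at x \<and> deriv f differentiable at x)"

definition char_triple ::
  "real \<Rightarrow> (real \<Rightarrow> real) \<Rightarrow> (real \<Rightarrow> real) \<Rightarrow> real \<Rightarrow> (real \<Rightarrow> real) \<Rightarrow> (real \<Rightarrow> real) \<Rightarrow> bool"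
where
  "char_triple \<kappa> V \<theta> lam w z \<longleftrightarrow>
     \<comment> \<open>backward problem for w\<close>
     continuous_on {0..1} w \<and> twice_diff_open_unit w \<and>
     (\<forall>x\<in>{0<..<1}. w x > 0) \<and> w 0 = 0 \<and> w 1 = 0 \<and>
     (\<forall>x\<in>{0<..<1}.
        - (\<kappa> / 2) * \<theta> x * deriv (deriv w) x + \<theta> x * deriv V x * deriv w x = lam * w x) \<and>
     \<comment> \<open>forward (adjoint) problem for z\<close>
     twice_diff_open_unit (\<lambda>x. \<theta> x * z x) \<and>
     (\<forall>x\<in>{0<..<1}. (\<lambda>y. \<theta> y * z y * deriv V y) differentiable at x) \<and>
     (\<forall>x\<in>{0<..<1}. z x > 0) \<and>
     (\<forall>x\<in>{0<..<1}.
        - (\<kappa> / 2) * deriv (deriv (\<lambda>y. \<theta> y * z y)) x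
        - deriv (\<lambda>y. \<theta> y * z y * deriv V y) x = lam * z x) \<and>
     ((\<lambda>x. \<theta> x * z x) \<longlongrightarrow> 0) (at_right 0) \<and>
     ((\<lambda>x. \<theta> x * z x) \<longlongrightarrow> 0) (at_left 1) \<and>
     \<comment> \<open>normalisations\<close>
     (z has_integral 1) {0..1} \<and>
     ((\<lambda>x. w x * z x) has_integral 1) {0..1}"

end

theory Submission
  imports Defs
begin

(* With the integrating factor m = exp(-2V/kappa), the backward equation for w and the forward
   equation for z, rewritten for v = theta z / m, become the same Sturm-Liouville equation
   (m y')' + (2 lam / kappa) (m / theta) y = 0 on (0,1).  The Wronskian of w and v is therefore
   constant.  Near 0 we have theta >= c x, so the potential is O(1/x); this still forces both
   fluxes m y' to stay bounded, and since w and v tend to 0 the Wronskian vanishes.  Hence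
   v = c w with c > 0, i.e. theta z = c m w, and the normalisation of w z identifies c = 1/C. *)

(* y solves (p y')' + q y = 0 on S, recorded together with its flux \<phi> = p y'. *)
definition solves_sturm_liouville ::
  "(real \<Rightarrow> real) \<Rightarrow> (real \<Rightarrow> real) \<Rightarrow> real set \<Rightarrow> (real \<Rightarrow> real) \<Rightarrow> (real \<Rightarrow> real) \<Rightarrow> bool"
where
  "solves_sturm_liouville p q S y \<phi> \<longleftrightarrow>
     (\<forall>x\<in>S. (y has_real_derivative \<phi> x / p x) (at x) \<and> (\<phi> has_real_derivative - q x * y x) (at x))"

lemma solves_sturm_liouville_subset:
  "solves_sturm_liouville p q S y \<phi> \<Longrightarrow> T \<subseteq> S \<Longrightarrow> solves_sturm_liouville p q T y \<phi>"
  unfolding solves_sturm_liouville_def by blast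

lemma abs_diff_le_of_abs_deriv_le:
  fixes f g f' g' :: "real \<Rightarrow> real"
  assumes "a \<le> b" and "continuous_on {a..b} f" and "continuous_on {a..b} g"
    and f': "\<And>x. x \<in> {a<..<b} \<Longrightarrow> (f has_real_derivative f' x) (at x)"
    and g': "\<And>x. x \<in> {a<..<b} \<Longrightarrow> (g has_real_derivative g' x) (at x)"
    and le: "\<And>x. x \<in> {a<..<b} \<Longrightarrow> \<bar>f' x\<bar> \<le> g' x"
  shows "\<bar>f b - f a\<bar> \<le> g b - g a"
proof -
  have "g a - f a \<le> g b - f b"
  proof (rule DERIV_nonneg_imp_increasing_open[OF \<open>a \<le> b\<close>])
    fix x assume "a < x" "x < b"
    then show "\<exists>D. ((\<lambda>x. g x - f x) has_real_derivative D) (at x) \<and> 0 \<le> D"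
      using f' g' le[of x] by (intro exI[of _ "g' x - f' x"]) (auto intro: DERIV_diff)
  qed (use assms in \<open>intro continuous_intros\<close>)
  moreover have "g a + f a \<le> g b + f b"
  proof (rule DERIV_nonneg_imp_increasing_open[OF \<open>a \<le> b\<close>])
    fix x assume "a < x" "x < b"
    then show "\<exists>D. ((\<lambda>x. g x + f x) has_real_derivative D) (at x) \<and> 0 \<le> D"
      using f' g' le[of x] by (intro exI[of _ "g' x + f' x"]) (auto intro: DERIV_add)
  qed (use assms in \<open>intro continuous_intros\<close>)
  ultimately show ?thesis by linarith
qed

lemma abs_le_of_abs_deriv_le_inverse:
  fixes g g' :: "real \<Rightarrow> real"
  assumes "0 < x" "x \<le> b" "b \<le> 1" "0 \<le> c"
    and g': "\<And>y. y \<in> {x..b} \<Longrightarrow> (g has_real_derivative g' y) (at y)"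
    and "\<And>y. y \<in> {x..b} \<Longrightarrow> \<bar>g' y\<bar> \<le> c / y"
  shows "\<bar>g x\<bar> \<le> \<bar>g b\<bar> + 2 * c / sqrt x"
proof -
  have "\<bar>g b - g x\<bar> \<le> c * ln b - c * ln x"
  proof (rule abs_diff_le_of_abs_deriv_le[where f'=g' and g'="\<lambda>y. c / y"])
    show "continuous_on {x..b} g"
      using g' by (intro DERIV_continuous_on) (auto intro: has_field_derivative_at_within)
    show "continuous_on {x..b} (\<lambda>y. c * ln y)"
      using \<open>0 < x\<close> by (intro continuous_intros) auto
    fix y assume "y \<in> {x<..<b}"
    then show "((\<lambda>y. c * ln y) has_real_derivative c / y) (at y)"
      using \<open>0 < x\<close> by (auto intro!: derivative_eq_intros)
  qed (use assms in auto)
  moreover have "- ln x \<le> 2 / sqrt x"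
  proof -
    have "ln (1 / sqrt x) \<le> 1 / sqrt x - 1"
      using \<open>0 < x\<close> by (intro ln_le_minus_one) simp
    then show ?thesis
      using \<open>0 < x\<close> by (simp add: ln_div ln_sqrt)
  qed
  then have "- (c * ln x) \<le> 2 * c / sqrt x"
    using \<open>0 \<le> c\<close> by (metis mult_left_mono mult_minus_right times_divide_eq_right mult.commute)
  moreover have "c * ln b \<le> 0"
    using assms by (simp add: mult_nonneg_nonpos)
  ultimately show ?thesis by linarith
qed

lemma abs_le_of_abs_deriv_le_inverse_sqrt:
  fixes g g' :: "real \<Rightarrow> real"
  assumes "0 < x" "x \<le> b" "0 \<le> c"
    and g': "\<And>y. y \<in> {x..b} \<Longrightarrow> (g has_real_derivative g' y) (at y)"
    and "\<And>y. y \<in> {x..b} \<Longrightarrow> \<bar>g' y\<bar> \<le> c / sqrt y"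
  shows "\<bar>g x\<bar> \<le> \<bar>g b\<bar> + 2 * c * sqrt b"
proof -
  have "\<bar>g b - g x\<bar> \<le> 2 * c * sqrt b - 2 * c * sqrt x"
  proof (rule abs_diff_le_of_abs_deriv_le[where f'=g' and g'="\<lambda>y. c / sqrt y"])
    show "continuous_on {x..b} g"
      using g' by (intro DERIV_continuous_on) (auto intro: has_field_derivative_at_within)
    show "continuous_on {x..b} (\<lambda>y. 2 * c * sqrt y)"
      by (intro continuous_intros)
    fix y assume "y \<in> {x<..<b}"
    then show "((\<lambda>y. 2 * c * sqrt y) has_real_derivative c / sqrt y) (at y)"
      using \<open>0 < x\<close> by (auto intro!: derivative_eq_intros simp: field_simps)
  qed (use assms in auto)
  moreover have "0 \<le> 2 * c * sqrt x"
    using assms by simp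
  ultimately show ?thesis by linarith
qed

lemma abs_le_sqrt_of_abs_deriv_le:
  fixes f f' :: "real \<Rightarrow> real"
  assumes "0 < t" "t \<le> 1" "0 \<le> P"
    and "continuous_on {0..t} f" "f 0 = 0"
    and "\<And>y. y \<in> {0<..<t} \<Longrightarrow> (f has_real_derivative f' y) (at y)"
    and "\<And>y. y \<in> {0<..<t} \<Longrightarrow> \<bar>f' y\<bar> \<le> P + Q / sqrt y"
  shows "\<bar>f t\<bar> \<le> (P + 2 * Q) * sqrt t"
proof -
  have "\<bar>f t - f 0\<bar> \<le> (P * t + 2 * Q * sqrt t) - (P * 0 + 2 * Q * sqrt 0)"
  proof (rule abs_diff_le_of_abs_deriv_le[where f'=f' and g'="\<lambda>y. P + Q / sqrt y"])
    show "continuous_on {0..t} (\<lambda>y. P * y + 2 * Q * sqrt y)"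
      by (intro continuous_intros)
    fix y assume "y \<in> {0<..<t}"
    then show "((\<lambda>y. P * y + 2 * Q * sqrt y) has_real_derivative P + Q / sqrt y) (at y)"
      by (auto intro!: derivative_eq_intros simp: field_simps)
  qed (use assms in auto)
  moreover have "P * t \<le> P * sqrt t"
    using assms by (intro mult_left_mono) (auto intro: real_le_rsqrt simp: power2_eq_square mult_left_le)
  ultimately show ?thesis
    using \<open>f 0 = 0\<close> by (simp add: algebra_simps)
qed

lemma continuous_on_Icc_at_rightI:
  fixes f :: "real \<Rightarrow> real"
  assumes "a < b" "(f \<longlongrightarrow> f a) (at_right a)" "\<And>x. x \<in> {a<..b} \<Longrightarrow> isCont f x"
  shows "continuous_on {a..b} f"
  unfolding continuous_on_eq_continuous_within
proof
  fix x assume x: "x \<in> {a..b}"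
  show "continuous (at x within {a..b}) f"
  proof (cases "x = a")
    case True
    then show ?thesis
      using assms(1,2) by (simp add: continuous_within at_within_Icc_at_right)
  next
    case False
    with x assms(3) show ?thesis
      by (simp add: continuous_at_imp_continuous_at_within)
  qed
qed

lemma solves_sturm_liouville_Bfun_flux:
  fixes p q y \<phi> :: "real \<Rightarrow> real"
  assumes "0 < b" "b \<le> 1" "0 < \<mu>"
    and sol: "solves_sturm_liouville p q {0<..b} y \<phi>"
    and p: "\<And>x. x \<in> {0<..b} \<Longrightarrow> \<mu> \<le> p x"
    and q: "\<And>x. x \<in> {0<..b} \<Longrightarrow> \<bar>q x\<bar> \<le> K / x"
    and y: "continuous_on {0..b} y" "y 0 = 0"
  shows "Bfun \<phi> (at_right 0)"
proof -
  (* Bootstrap: bounded y gives |\<phi>| = O(x^(-1/2)) by a logarithmic estimate, hence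
     |y| = O(sqrt x), hence |\<phi>'| = O(x^(-1/2)), which is integrable at 0. *)
  have "0 \<le> K / b"
    using q[of b] \<open>0 < b\<close> abs_ge_zero[of "q b"] by (meson greaterThanAtMost_iff order_refl order_trans)
  then have "0 \<le> K"
    using \<open>0 < b\<close> by (simp add: zero_le_divide_iff)
  have y': "(y has_real_derivative \<phi> x / p x) (at x)"
    and \<phi>': "(\<phi> has_real_derivative - q x * y x) (at x)" if "x \<in> {0<..b}" for x
    using sol that unfolding solves_sturm_liouville_def by auto
  have \<phi>'_le: "\<bar>- q x * y x\<bar> \<le> K * Y / x" if "x \<in> {0<..b}" "\<bar>y x\<bar> \<le> Y" for x Y
    using mult_mono[OF q[OF that(1)] that(2)] that(1) \<open>0 \<le> K\<close> by (simp add: abs_mult)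
  obtain F where F: "\<forall>x\<in>{0..b}. \<bar>y x\<bar> \<le> F"
    using compact_imp_bounded[OF compact_continuous_image[OF y(1) compact_Icc]]
    by (auto simp: bounded_iff)
  have "0 \<le> F"
    using F \<open>0 < b\<close> by force
  define P where "P = \<bar>\<phi> b\<bar> / \<mu>"
  define Q where "Q = 2 * (K * F) / \<mu>"
  have y'_le: "\<bar>\<phi> x / p x\<bar> \<le> P + Q / sqrt x" if x: "x \<in> {0<..b}" for x
  proof -
    have "\<bar>\<phi> x / p x\<bar> \<le> \<bar>\<phi> x\<bar> / \<mu>"
      using p[OF x] \<open>0 < \<mu>\<close> by (simp add: abs_div frac_le)
    also have "\<dots> \<le> (\<bar>\<phi> b\<bar> + 2 * (K * F) / sqrt x) / \<mu>"
      using x \<open>b \<le> 1\<close> \<open>0 \<le> K\<close> \<open>0 \<le> F\<close> \<open>0 < \<mu>\<close> \<phi>' \<phi>'_le F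
      by (intro divide_right_mono abs_le_of_abs_deriv_le_inverse[where g'="\<lambda>x. - q x * y x"]) auto
    also have "\<dots> = P + Q / sqrt x"
      unfolding P_def Q_def by (simp add: add_divide_distrib)
    finally show ?thesis .
  qed
  define R where "R = P + 2 * Q"
  have y_le: "\<bar>y x\<bar> \<le> R * sqrt x" if x: "x \<in> {0<..b}" for x
    unfolding R_def using x \<open>b \<le> 1\<close> \<open>0 < \<mu>\<close> y y' y'_le
    by (intro abs_le_sqrt_of_abs_deriv_le[where f'="\<lambda>x. \<phi> x / p x"])
       (auto simp: P_def intro: continuous_on_subset)
  have "0 \<le> R"
    unfolding R_def P_def Q_def using \<open>0 \<le> K\<close> \<open>0 \<le> F\<close> \<open>0 < \<mu>\<close> by simp
  have "\<bar>\<phi> x\<bar> \<le> \<bar>\<phi> b\<bar> + 2 * (K * R) * sqrt b" if x: "x \<in> {0<..b}" for x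
  proof (rule abs_le_of_abs_deriv_le_inverse_sqrt[where g'="\<lambda>x. - q x * y x"])
    fix t assume t: "t \<in> {x..b}"
    then have "\<bar>- q t * y t\<bar> \<le> K * (R * sqrt t) / t"
      using x \<phi>'_le y_le by auto
    also have "\<dots> = K * R / sqrt t"
      using t x by (auto simp: field_simps real_div_sqrt)
    finally show "\<bar>- q t * y t\<bar> \<le> K * R / sqrt t" .
  qed (use x \<phi>' \<open>0 \<le> K\<close> \<open>0 \<le> R\<close> in auto)
  then show ?thesis
    by (intro BfunI[where K="\<bar>\<phi> b\<bar> + 2 * (K * R) * sqrt b"]
        eventually_at_right_real[OF \<open>0 < b\<close>, THEN eventually_mono]) auto
qed

lemma solves_sturm_liouville_wronskian_has_derivative:
  assumes "solves_sturm_liouville p q S y\<^sub>1 \<phi>\<^sub>1" "solves_sturm_liouville p q S y\<^sub>2 \<phi>\<^sub>2" "x \<in> S"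
  shows "((\<lambda>x. y\<^sub>1 x * \<phi>\<^sub>2 x - y\<^sub>2 x * \<phi>\<^sub>1 x) has_real_derivative 0) (at x)"
proof -
  have "(y\<^sub>1 has_real_derivative \<phi>\<^sub>1 x / p x) (at x)" "(\<phi>\<^sub>1 has_real_derivative - q x * y\<^sub>1 x) (at x)"
    and "(y\<^sub>2 has_real_derivative \<phi>\<^sub>2 x / p x) (at x)" "(\<phi>\<^sub>2 has_real_derivative - q x * y\<^sub>2 x) (at x)"
    using assms unfolding solves_sturm_liouville_def by auto
  from DERIV_diff[OF DERIV_mult[OF this(1,4)] DERIV_mult[OF this(3,2)]] show ?thesis
    by (simp add: algebra_simps)
qed

lemma solves_sturm_liouville_wronskian_eq_0:
  assumes "a < b" and sol: "solves_sturm_liouville p q {a<..<b} y\<^sub>1 \<phi>\<^sub>1" "solves_sturm_liouville p q {a<..<b} y\<^sub>2 \<phi>\<^sub>2"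
    and lim: "(y\<^sub>1 \<longlongrightarrow> 0) (at_right a)" "(y\<^sub>2 \<longlongrightarrow> 0) (at_right a)"
    and bdd: "Bfun \<phi>\<^sub>1 (at_right a)" "Bfun \<phi>\<^sub>2 (at_right a)"
    and "x \<in> {a<..<b}"
  shows "y\<^sub>1 x * \<phi>\<^sub>2 x - y\<^sub>2 x * \<phi>\<^sub>1 x = 0"
proof -
  define W where "W = (\<lambda>x. y\<^sub>1 x * \<phi>\<^sub>2 x - y\<^sub>2 x * \<phi>\<^sub>1 x)"
  have "W t = W x" if "t \<in> {a<..<b}" for t
    using DERIV_isconst3[OF \<open>a < b\<close> that \<open>x \<in> {a<..<b}\<close>] sol
    unfolding W_def by (blast intro: solves_sturm_liouville_wronskian_has_derivative)
  then have "\<forall>\<^sub>F t in at_right a. W t = W x"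
    using eventually_at_right_real[OF \<open>a < b\<close>] by (auto elim: eventually_mono)
  moreover have "(W \<longlongrightarrow> 0) (at_right a)"
    using lim bdd
    unfolding W_def tendsto_Zfun_iff
    by (auto intro!: Zfun_diff bounded_bilinear.Zfun_prod_Bfun[OF bounded_bilinear_mult])
  ultimately have "((\<lambda>_. W x) \<longlongrightarrow> 0) (at_right a)"
    by (rule Lim_transform_eventually[rotated])
  then show ?thesis
    unfolding W_def by (simp add: tendsto_const_iff)
qed

lemma solves_sturm_liouville_proportional:
  assumes "a < b" and sol: "solves_sturm_liouville p q {a<..<b} y\<^sub>1 \<phi>\<^sub>1" "solves_sturm_liouville p q {a<..<b} y\<^sub>2 \<phi>\<^sub>2"
    and "(y\<^sub>1 \<longlongrightarrow> 0) (at_right a)" "(y\<^sub>2 \<longlongrightarrow> 0) (at_right a)"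
    and "Bfun \<phi>\<^sub>1 (at_right a)" "Bfun \<phi>\<^sub>2 (at_right a)"
    and nz: "\<And>x. x \<in> {a<..<b} \<Longrightarrow> y\<^sub>1 x \<noteq> 0"
    and "x \<in> {a<..<b}" "x\<^sub>0 \<in> {a<..<b}"
  shows "y\<^sub>2 x = y\<^sub>2 x\<^sub>0 / y\<^sub>1 x\<^sub>0 * y\<^sub>1 x"
proof -
  have "((\<lambda>x. y\<^sub>2 x / y\<^sub>1 x) has_real_derivative 0) (at t)" if t: "t \<in> {a<..<b}" for t
  proof -
    have "((\<lambda>x. y\<^sub>2 x / y\<^sub>1 x) has_real_derivative
        (\<phi>\<^sub>2 t / p t * y\<^sub>1 t - y\<^sub>2 t * (\<phi>\<^sub>1 t / p t)) / (y\<^sub>1 t * y\<^sub>1 t)) (at t)"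
      using sol t nz[OF t] unfolding solves_sturm_liouville_def by (blast intro: DERIV_divide)
    moreover have "y\<^sub>1 t * \<phi>\<^sub>2 t - y\<^sub>2 t * \<phi>\<^sub>1 t = 0"
      using solves_sturm_liouville_wronskian_eq_0 assms t by blast
    ultimately show ?thesis
      by (simp add: field_simps)
  qed
  then have "y\<^sub>2 x / y\<^sub>1 x = y\<^sub>2 x\<^sub>0 / y\<^sub>1 x\<^sub>0"
    using DERIV_isconst3[OF \<open>a < b\<close>] assms by blast
  then show ?thesis
    using nz[OF \<open>x \<in> {a<..<b}\<close>] by (simp add: field_simps)
qed

lemma solves_sturm_liouville_proportional_of_regular_0:
  assumes "0 < b" "b < 1"
    and sol: "solves_sturm_liouville p q {0<..<1} y\<^sub>1 \<phi>\<^sub>1" "solves_sturm_liouville p q {0<..<1} y\<^sub>2 \<phi>\<^sub>2"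
    and "0 < \<mu>" "\<And>x. x \<in> {0<..b} \<Longrightarrow> \<mu> \<le> p x" "\<And>x. x \<in> {0<..b} \<Longrightarrow> \<bar>q x\<bar> \<le> K / x"
    and y\<^sub>1: "continuous_on {0..b} y\<^sub>1" "y\<^sub>1 0 = 0" and y\<^sub>2: "continuous_on {0..b} y\<^sub>2" "y\<^sub>2 0 = 0"
    and "\<And>x. x \<in> {0<..<1} \<Longrightarrow> y\<^sub>1 x \<noteq> 0" "x \<in> {0<..<1}" "x\<^sub>0 \<in> {0<..<1}"
  shows "y\<^sub>2 x = y\<^sub>2 x\<^sub>0 / y\<^sub>1 x\<^sub>0 * y\<^sub>1 x"
proof (rule solves_sturm_liouville_proportional[OF zero_less_one sol])
  have sub: "{0<..b} \<subseteq> {0<..<1}"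
    using \<open>b < 1\<close> by auto
  show "Bfun \<phi>\<^sub>1 (at_right 0)" "Bfun \<phi>\<^sub>2 (at_right 0)"
    using assms solves_sturm_liouville_subset[OF sol(1) sub] solves_sturm_liouville_subset[OF sol(2) sub]
    by (auto intro!: solves_sturm_liouville_Bfun_flux[where b=b and \<mu>=\<mu> and K=K])
  show "(y\<^sub>1 \<longlongrightarrow> 0) (at_right 0)" "(y\<^sub>2 \<longlongrightarrow> 0) (at_right 0)"
    using continuous_on_Icc_at_rightD[OF y\<^sub>1(1) \<open>0 < b\<close>] continuous_on_Icc_at_rightD[OF y\<^sub>2(1) \<open>0 < b\<close>] y\<^sub>1(2) y\<^sub>2(2)
    by simp_all
qed (use assms in auto)

lemma compact_continuous_pos_bounds:
  fixes f :: "'a::topological_space \<Rightarrow> real"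
  assumes "compact S" "S \<noteq> {}" "continuous_on S f" "\<And>x. x \<in> S \<Longrightarrow> 0 < f x"
  obtains \<mu> M where "0 < \<mu>" "\<And>x. x \<in> S \<Longrightarrow> \<mu> \<le> f x \<and> f x \<le> M"
proof -
  obtain x\<^sub>1 where "x\<^sub>1 \<in> S" "\<forall>x\<in>S. f x\<^sub>1 \<le> f x"
    using continuous_attains_inf[OF assms(1-3)] by auto
  moreover obtain x\<^sub>2 where "\<forall>x\<in>S. f x \<le> f x\<^sub>2"
    using continuous_attains_sup[OF assms(1-3)] by auto
  ultimately show thesis
    using that[of "f x\<^sub>1" "f x\<^sub>2"] assms(4) by simp
qed

lemma smooth_on_unit_has_derivative_within:
  assumes "smooth_on_unit f"
  obtains f' where "\<And>x. x \<in> {0..1} \<Longrightarrow> (f has_real_derivative f' x) (at x within {0..1})"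
proof -
  obtain D where "D 0 = f" "\<forall>n. \<forall>x\<in>{0..1}. (D n has_real_derivative D (Suc n) x) (at x within {0..1})"
    using assms unfolding smooth_on_unit_def by blast
  then show ?thesis
    using that[of "D (Suc 0)"] by metis
qed

lemma smooth_on_unit_continuous_on:
  "smooth_on_unit f \<Longrightarrow> continuous_on {0..1} f"
  by (metis smooth_on_unit_has_derivative_within DERIV_continuous_on)

lemma smooth_on_unit_has_real_derivative:
  assumes "smooth_on_unit f" "x \<in> {0<..<1}"
  shows "(f has_real_derivative deriv f x) (at x)"
proof -
  obtain f' where f': "\<And>x. x \<in> {0..1} \<Longrightarrow> (f has_real_derivative f' x) (at x within {0..1})"
    using smooth_on_unit_has_derivative_within[OF assms(1)] by blast
  have "(f has_real_derivative f' x) (at x)"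
    using f'[of x] assms(2) at_within_interior[of x "{0..1::real}"] by auto
  then show ?thesis
    by (simp add: DERIV_imp_deriv)
qed

lemma ge_linear_near_0_of_has_real_derivative:
  fixes f :: "real \<Rightarrow> real"
  assumes "f 0 = 0" "(f has_real_derivative d) (at 0 within {0..1})" "0 < d"
  obtains b where "0 < b" "b < 1" "\<And>x. x \<in> {0<..b} \<Longrightarrow> d / 2 * x \<le> f x"
proof -
  have "((\<lambda>x. f x / x) \<longlongrightarrow> d) (at_right 0)"
    using assms(1,2) by (simp add: has_field_derivative_iff at_within_Icc_at_right)
  then have "\<forall>\<^sub>F x in at_right 0. d / 2 < f x / x"
    using \<open>0 < d\<close> by (intro order_tendstoD(1)) auto
  then obtain e where "0 < e" and e: "\<And>x. 0 < x \<Longrightarrow> x < e \<Longrightarrow> d / 2 < f x / x"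
    unfolding eventually_at_right_field by blast
  show ?thesis
  proof
    show "0 < min (e / 2) (1 / 2)" "min (e / 2) (1 / 2) < (1::real)"
      using \<open>0 < e\<close> by auto
    fix x assume "x \<in> {0<..min (e / 2) (1 / 2)}"
    then show "d / 2 * x \<le> f x"
      using e[of x] \<open>0 < e\<close> by (simp add: field_simps)
  qed
qed

lemma ratio_le_inverse_near_0:
  fixes \<theta> m :: "real \<Rightarrow> real"
  assumes "\<theta> 0 = 0" "(\<theta> has_real_derivative d) (at 0 within {0..1})" "0 < d"
    and \<theta>: "\<And>x. x \<in> {0<..<1} \<Longrightarrow> 0 < \<theta> x"
    and m: "continuous_on {0..1} m" "\<And>x. x \<in> {0..1} \<Longrightarrow> 0 < m x"
  obtains b \<mu> K where "0 < b" "b < 1" "0 < \<mu>" "\<And>x. x \<in> {0<..b} \<Longrightarrow> \<mu> \<le> m x"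
    "\<And>x. x \<in> {0<..b} \<Longrightarrow> \<bar>A * m x / \<theta> x\<bar> \<le> K / x"
proof -
  obtain \<mu> M where "0 < \<mu>" and m_bounds: "\<And>x. x \<in> {0..1} \<Longrightarrow> \<mu> \<le> m x \<and> m x \<le> M"
    using compact_continuous_pos_bounds[OF compact_Icc _ m] by auto
  obtain b where b: "0 < b" "b < 1" and \<theta>_ge: "\<And>x. x \<in> {0<..b} \<Longrightarrow> d / 2 * x \<le> \<theta> x"
    using ge_linear_near_0_of_has_real_derivative[OF assms(1-3)] by blast
  have "\<bar>A * m x / \<theta> x\<bar> \<le> \<bar>A\<bar> * M / (d / 2) / x" if x: "x \<in> {0<..b}" for x
  proof -
    have "\<bar>A * m x / \<theta> x\<bar> = \<bar>A\<bar> * m x / \<theta> x"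
      using \<theta>[of x] m(2)[of x] x b by (simp add: abs_mult)
    also have "\<dots> \<le> \<bar>A\<bar> * M / (d / 2 * x)"
      using m_bounds[of x] \<theta>_ge[OF x] x b \<open>0 < d\<close> \<open>0 < \<mu>\<close> by (intro frac_le mult_left_mono) auto
    finally show ?thesis
      by simp
  qed
  with b \<open>0 < \<mu>\<close> m_bounds show thesis
    by (intro that[of b \<mu> "\<bar>A\<bar> * M / (d / 2)"]) auto
qed

lemma char_triple_backward_solves_sturm_liouville:
  assumes "0 < \<kappa>" "char_triple \<kappa> V \<theta> lam w z"
    and \<theta>: "\<And>x. x \<in> {0<..<1} \<Longrightarrow> 0 < \<theta> x"
    and m: "\<And>x. x \<in> {0<..<1} \<Longrightarrow> (m has_real_derivative - 2 * deriv V x / \<kappa> * m x) (at x)"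
    and m_nz: "\<And>x. x \<in> {0<..<1} \<Longrightarrow> m x \<noteq> 0"
  shows "solves_sturm_liouville m (\<lambda>x. 2 * lam / \<kappa> * m x / \<theta> x) {0<..<1} w (\<lambda>x. m x * deriv w x)"
  unfolding solves_sturm_liouville_def
proof (intro ballI conjI)
  fix x :: real assume x: "x \<in> {0<..<1}"
  have w': "(w has_real_derivative deriv w x) (at x)"
    and w'': "(deriv w has_real_derivative deriv (deriv w) x) (at x)"
    and ode: "- (\<kappa> / 2) * \<theta> x * deriv (deriv w) x + \<theta> x * deriv V x * deriv w x = lam * w x"
    using assms(2) x unfolding char_triple_def twice_diff_open_unit_def
    by (auto simp: DERIV_deriv_iff_real_differentiable)
  show "(w has_real_derivative m x * deriv w x / m x) (at x)"
    using w' m_nz[OF x] by simp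
  have w''_eq: "deriv (deriv w) x = 2 / \<kappa> * (deriv V x * deriv w x - lam * w x / \<theta> x)"
    using ode \<open>0 < \<kappa>\<close> \<theta>[OF x] by (simp add: field_simps)
  have "- 2 * deriv V x / \<kappa> * m x * deriv w x + deriv (deriv w) x * m x
      = - (2 * lam / \<kappa> * m x / \<theta> x * w x)"
    unfolding w''_eq using \<open>0 < \<kappa>\<close> \<theta>[OF x] by (simp add: field_simps)
  with DERIV_mult[OF m[OF x] w''] show
    "((\<lambda>x. m x * deriv w x) has_real_derivative - (2 * lam / \<kappa> * m x / \<theta> x) * w x) (at x)"
    by simp
qed

lemma char_triple_forward_solves_sturm_liouville:
  assumes "0 < \<kappa>" "char_triple \<kappa> V \<theta> lam w z"
    and \<theta>: "\<And>x. x \<in> {0<..<1} \<Longrightarrow> 0 < \<theta> x"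
    and m: "\<And>x. x \<in> {0<..<1} \<Longrightarrow> (m has_real_derivative - 2 * deriv V x / \<kappa> * m x) (at x)"
    and m_nz: "\<And>x. x \<in> {0<..<1} \<Longrightarrow> m x \<noteq> 0"
  shows "solves_sturm_liouville m (\<lambda>x. 2 * lam / \<kappa> * m x / \<theta> x) {0<..<1} (\<lambda>x. \<theta> x * z x / m x)
    (\<lambda>x. deriv (\<lambda>y. \<theta> y * z y) x + 2 / \<kappa> * (\<theta> x * z x * deriv V x))"
  unfolding solves_sturm_liouville_def
proof (intro ballI conjI)
  fix x :: real assume x: "x \<in> {0<..<1}"
  define u where "u = (\<lambda>y. \<theta> y * z y)"
  define P where "P = (\<lambda>y. \<theta> y * z y * deriv V y)"
  have u': "(u has_real_derivative deriv u x) (at x)"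
    and u'': "(deriv u has_real_derivative deriv (deriv u) x) (at x)"
    and P': "(P has_real_derivative deriv P x) (at x)"
    and ode: "- (\<kappa> / 2) * deriv (deriv u) x - deriv P x = lam * z x"
    using assms(2) x unfolding char_triple_def twice_diff_open_unit_def u_def P_def
    by (auto simp: DERIV_deriv_iff_real_differentiable)
  have "(deriv u x * m x - u x * (- 2 * deriv V x / \<kappa> * m x)) / (m x * m x)
      = (deriv u x + 2 / \<kappa> * P x) / m x"
    using m_nz[OF x] unfolding P_def u_def by (simp add: field_simps)
  with DERIV_divide[OF u' m[OF x] m_nz[OF x]] show
    "((\<lambda>x. \<theta> x * z x / m x) has_real_derivative
      (deriv (\<lambda>y. \<theta> y * z y) x + 2 / \<kappa> * (\<theta> x * z x * deriv V x)) / m x) (at x)"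
    unfolding u_def P_def by simp
  have u''_eq: "deriv (deriv u) x = - 2 / \<kappa> * (deriv P x + lam * z x)"
    using ode \<open>0 < \<kappa>\<close> by (simp add: field_simps)
  have "deriv (deriv u) x + 2 / \<kappa> * deriv P x = - (2 * lam / \<kappa> * m x / \<theta> x) * (\<theta> x * z x / m x)"
    unfolding u''_eq using \<open>0 < \<kappa>\<close> \<theta>[OF x] m_nz[OF x] by (simp add: field_simps)
  with DERIV_add[OF u'' DERIV_cmult[OF P', of "2 / \<kappa>"]] show
    "((\<lambda>x. deriv (\<lambda>y. \<theta> y * z y) x + 2 / \<kappa> * (\<theta> x * z x * deriv V x)) has_real_derivative
      - (2 * lam / \<kappa> * m x / \<theta> x) * (\<theta> x * z x / m x)) (at x)"
    unfolding u_def P_def by simp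
qed

lemma char_triple_forward_continuous_on:
  assumes "char_triple \<kappa> V \<theta> lam w z" "\<theta> 0 = 0" "0 < b" "b < 1"
    and m: "continuous_on {0..1} m" "\<And>x. x \<in> {0..1} \<Longrightarrow> 0 < m x"
  shows "continuous_on {0..b} (\<lambda>x. \<theta> x * z x / m x)"
proof (rule continuous_on_Icc_at_rightI[OF \<open>0 < b\<close>])
  have "((\<lambda>x. \<theta> x * z x) \<longlongrightarrow> 0) (at_right 0)"
    using assms(1) unfolding char_triple_def by blast
  from tendsto_divide[OF this continuous_on_Icc_at_rightD[OF m(1) zero_less_one]]
  show "((\<lambda>x. \<theta> x * z x / m x) \<longlongrightarrow> \<theta> 0 * z 0 / m 0) (at_right 0)"
    using m(2)[of 0] \<open>\<theta> 0 = 0\<close> by simp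
  fix x assume "x \<in> {0<..b}"
  then have x: "x \<in> {0<..<1}"
    using \<open>b < 1\<close> by auto
  then have "(\<lambda>x. \<theta> x * z x) differentiable at x"
    using assms(1) unfolding char_triple_def twice_diff_open_unit_def by blast
  then have "isCont (\<lambda>x. \<theta> x * z x) x"
    by (rule differentiable_imp_continuous_within)
  moreover have "isCont m x"
    using continuous_on_interior[OF m(1)] x by simp
  ultimately show "isCont (\<lambda>x. \<theta> x * z x / m x) x"
    using m(2)[of x] x by (intro isCont_divide) auto
qed

lemma char_triple_forward_proportional_backward:
  assumes "0 < \<kappa>" and triple: "char_triple \<kappa> V \<theta> lam w z"
    and \<theta>: "\<And>x. x \<in> {0<..<1} \<Longrightarrow> 0 < \<theta> x" "\<theta> 0 = 0"
    and \<theta>': "(\<theta> has_real_derivative d) (at 0 within {0..1})" "0 < d"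
    and m': "\<And>x. x \<in> {0<..<1} \<Longrightarrow> (m has_real_derivative - 2 * deriv V x / \<kappa> * m x) (at x)"
    and m: "continuous_on {0..1} m" "\<And>x. x \<in> {0..1} \<Longrightarrow> 0 < m x"
  obtains c where "0 < c" "\<And>x. x \<in> {0<..<1} \<Longrightarrow> \<theta> x * z x = c * m x * w x"
proof -
  have w_pos: "\<And>x. x \<in> {0<..<1} \<Longrightarrow> 0 < w x" and z_pos: "\<And>x. x \<in> {0<..<1} \<Longrightarrow> 0 < z x"
    and w: "continuous_on {0..1} w" "w 0 = 0"
    using triple unfolding char_triple_def by auto
  have m_nz: "m x \<noteq> 0" if "x \<in> {0<..<1}" for x
    using m(2)[of x] that by auto
  define q where "q = (\<lambda>x. 2 * lam / \<kappa> * m x / \<theta> x)"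
  define v where "v = (\<lambda>x. \<theta> x * z x / m x)"
  have sol_w: "solves_sturm_liouville m q {0<..<1} w (\<lambda>x. m x * deriv w x)"
    unfolding q_def using \<open>0 < \<kappa>\<close> triple \<theta>(1) m' m_nz
    by (rule char_triple_backward_solves_sturm_liouville)
  have sol_v: "solves_sturm_liouville m q {0<..<1} v
      (\<lambda>x. deriv (\<lambda>y. \<theta> y * z y) x + 2 / \<kappa> * (\<theta> x * z x * deriv V x))"
    unfolding q_def v_def using \<open>0 < \<kappa>\<close> triple \<theta>(1) m' m_nz
    by (rule char_triple_forward_solves_sturm_liouville)
  obtain b \<mu> K where b: "0 < b" "b < 1" and "0 < \<mu>" and m_ge: "\<And>x. x \<in> {0<..b} \<Longrightarrow> \<mu> \<le> m x"
    and q_le: "\<And>x. x \<in> {0<..b} \<Longrightarrow> \<bar>q x\<bar> \<le> K / x"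
    unfolding q_def using ratio_le_inverse_near_0[OF \<theta>(2) \<theta>' \<theta>(1) m] by blast
  have v_eq: "v x = v (1/2) / w (1/2) * w x" if "x \<in> {0<..<1}" for x
  proof (rule solves_sturm_liouville_proportional_of_regular_0[OF b sol_w sol_v \<open>0 < \<mu>\<close> _ q_le])
    show "continuous_on {0..b} v"
      unfolding v_def using char_triple_forward_continuous_on[OF triple \<theta>(2) b m] .
    show "continuous_on {0..b} w"
      using w(1) b by (auto intro: continuous_on_subset)
    show "w t \<noteq> 0" if "t \<in> {0<..<1}" for t
      using w_pos[OF that] by simp
  qed (use that m_ge w(2) in \<open>auto simp: v_def \<theta>(2)\<close>)
  show ?thesis
  proof
    show "0 < v (1/2) / w (1/2)"
      using w_pos[of "1/2"] z_pos[of "1/2"] \<theta>(1)[of "1/2"] m(2)[of "1/2"] unfolding v_def by simp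
    show "\<theta> x * z x = v (1/2) / w (1/2) * m x * w x" if "x \<in> {0<..<1}" for x
      using v_eq[OF that] m_nz[OF that] unfolding v_def by (simp add: field_simps)
  qed
qed

theorem lemma9:
  fixes \<kappa> lam :: real and V \<theta> w z :: "real \<Rightarrow> real"
  assumes "\<kappa> > 0"
    and "smooth_on_unit V"
    and "smooth_on_unit \<theta>"
    and "\<forall>x\<in>{0<..<1}. \<theta> x > 0"
    and "\<theta> 0 = 0" and "\<theta> 1 = 0"
    and "\<exists>d. (\<theta> has_real_derivative d) (at 0 within {0..1}) \<and> d > 0"
    and "\<exists>d. (\<theta> has_real_derivative d) (at 1 within {0..1}) \<and> d < 0"
    and "char_triple \<kappa> V \<theta> lam w z"
  shows "\<exists>C. ((\<lambda>x. (w x)^2 * exp (- 2 * V x / \<kappa>) / \<theta> x) has_integral C) {0..1} \<and> C > 0 \<and>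
           (\<forall>x\<in>{0<..<1}. w x * z x = (1 / C) * ((w x)^2 * exp (- 2 * V x / \<kappa>) / \<theta> x))"
proof -
  obtain d where d: "(\<theta> has_real_derivative d) (at 0 within {0..1})" "0 < d"
    using assms(7) by blast
  have m': "((\<lambda>x. exp (- 2 * V x / \<kappa>)) has_real_derivative - 2 * deriv V x / \<kappa> * exp (- 2 * V x / \<kappa>)) (at x)"
    if "x \<in> {0<..<1}" for x
    using smooth_on_unit_has_real_derivative[OF assms(2) that] assms(1) by (auto intro!: derivative_eq_intros)
  have m_cont: "continuous_on {0..1} (\<lambda>x. exp (- 2 * V x / \<kappa>))"
    using smooth_on_unit_continuous_on[OF assms(2)] assms(1) by (intro continuous_intros) auto
  obtain c where "0 < c" and \<theta>z: "\<And>x. x \<in> {0<..<1} \<Longrightarrow> \<theta> x * z x = c * exp (- 2 * V x / \<kappa>) * w x"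
    using char_triple_forward_proportional_backward[OF assms(1,9) _ assms(5) d m' m_cont exp_gt_zero] assms(4)
    by blast
  have wz: "w x * z x = c * ((w x)^2 * exp (- 2 * V x / \<kappa>) / \<theta> x)" if "x \<in> {0<..<1}" for x
  proof -
    have "\<theta> x \<noteq> 0"
      using assms(4) that by force
    then have "z x = c * exp (- 2 * V x / \<kappa>) * w x / \<theta> x"
      using \<theta>z[OF that] by (simp add: field_simps)
    then show ?thesis
      by (simp add: power2_eq_square)
  qed
  have "((\<lambda>x. w x * z x) has_integral 1) {0..1}"
    using assms(9) unfolding char_triple_def by blast
  from has_integral_mult_right[OF this, of "1 / c"]
  have "((\<lambda>x. 1 / c * (w x * z x)) has_integral 1 / c) {0..1}"
    by simp
  then have "((\<lambda>x. (w x)^2 * exp (- 2 * V x / \<kappa>) / \<theta> x) has_integral 1 / c) {0..1}"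
    by (rule has_integral_spike_finite[of "{0, 1}", rotated 2]) (use wz \<open>0 < c\<close> in auto)
  with \<open>0 < c\<close> wz show ?thesis
    by (intro exI[of _ "1 / c"]) auto
qed

end
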